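(* Under Assumptions 1–4 below, the iterates of Algorithm 2Direction satisfy, for every $t\ge0$, $$\mathbb E_t\big[\|g^{t+1}-\nabla f(y^{t+1})\|^2\big]\le\frac{2\omega}{n^2}\sum_{i=1}^n\|\nabla f_i(z^t)-h_i^t\|^2+\frac{4\omega L_{\max}}{n}\big(f(z^t)-f(y^{t+1})-\langle\nabla f(y^{t+1}),z^t-y^{t+1}\rangle\big).$$
   Context: Setting: $f=\frac1n\sum_{i=1}^nf_i$, $f_i:\mathbb R^d\to\mathbb R$. Assumption 1: each $f_i$ is $L_i$-smooth, $L_{\max}=\max_iL_i$, and $\widehat L>0$ satisfies $\frac1n\sum_i\|\nabla f_i(x)-\nabla f_i(y)\|^2\le\widehat L^2\|x-y\|^2$ for all $x,y$. Assumption 2: $f$ is $L$-smooth. Assumption 3: each $f_i$ is convex and $f$ is $\mu$-strongly convex ($\mu\ge0$) with minimizer $x^*$. Assumption 4: the randomness of all compressors is drawn independently (of each other, of the coins $c^t$, and of the past). Compressor classes: $\mathbb U(\omega)$ ($\omega\ge0$) = stochastic maps $\mathcal C$ with $\mathbb E\mathcal C(x)=x$, $\mathbb E\|\mathcal C(x)-x\|^2\le\omega\|x\|^2$; $\mathbb B(\alpha)$ ($\alpha\in(0,1]$) = possibly stochastic maps with $\mathbb E\|\mathcal C(x)-x\|^2\le(1-\alpha)\|x\|^2$. Algorithm 2Direction: compressors $\mathcal C_i^{D,y},\mathcal C_i^{D,z}\in\mathbb U(\omega)$ (workers), $\mathcal C^P\in\mathbb B(\alpha)$ (server); parameters $\bar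 L>0$, $\mu\ge0$, $p\in(0,1]$, $\Gamma_0\ge1$, $\tau\in(0,1]$, $x^0,h_1^0,\dots,h_n^0,k^0,v^0\in\mathbb R^d$. Set $\beta=1/(\omega+1)$, $w^0=z^0=u^0=x^0$, $h^0=\frac1n\sum_ih_i^0$, $\theta_{\min}=\frac14\min\{1,\alpha/p,\tau/p,\beta/p\}$. For $t=0,1,\dots$: let $\bar\theta_{t+1}$ be the largest root of $p\bar L\Gamma_t\theta^2+p(\bar L+\Gamma_t\mu)\theta-(\bar L+\Gamma_t\mu)=0$, $\theta_{t+1}=\min\{\bar\theta_{t+1},\theta_{\min}\}$, $\gamma_{t+1}=p\theta_{t+1}\Gamma_t/(1-p\theta_{t+1})$, $\Gamma_{t+1}=\Gamma_t+\gamma_{t+1}$; $y^{t+1}=\theta_{t+1}w^t+(1-\theta_{t+1})z^t$; $m_i^{t,y}=\mathcal C_i^{D,y}(\nabla f_i(y^{t+1})-h_i^t)$; $g^{t+1}=h^t+\frac1n\sum_im_i^{t,y}$; $u^{t+1}=\arg\min_x\{\langle g^{t+1},x\rangle+\frac{\bar L+\Gamma_t\mu}{2\gamma_{t+1}}\|x-u^t\|^2+\frac\mu2\|x-y^{t+1}\|^2\}$; $q^{t+1}=\arg\min_x\{\langle k^t,x\rangle+\frac{\bar L+\Gamma_t\mu}{2\gamma_{t+1}}\|x-w^t\|^2+\frac\mu2\|x-y^{t+1}\|^2\}$; $w^{t+1}=q^{t+1}+\mathcal C^P(u^{t+1}-q^{t+1})$; $x^{t+1}=\theta_{t+1}u^{t+1}+(1-\theta_{t+1})z^t$;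 draw $c^t\sim\mathrm{Bernoulli}(p)$, and set $(k^{t+1},z^{t+1})=(v^t,x^{t+1})$ if $c^t=1$, $(k^{t+1},z^{t+1})=(k^t,z^t)$ if $c^t=0$; $m_i^{t,z}=\mathcal C_i^{D,z}(\nabla f_i(z^{t+1})-h_i^t)$; $h_i^{t+1}=h_i^t+\beta m_i^{t,z}$; $v^{t+1}=(1-\tau)v^t+\tau(h^t+\frac1n\sum_im_i^{t,z})$; $h^{t+1}=h^t+\frac\beta n\sum_im_i^{t,z}$. $\mathbb E_t$ denotes conditional expectation given the randomness of the first $t$ iterations. *)

theory Defs
  imports "HOL-Analysis.Analysis" "HOL-Probability.Probability"
begin

text \<open>An unbiased compressor of class U(omega), modelled as a random map:
  C x s is the compressed value of x at sample point s of the probability space M.\<close>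
definition unbiased_compressor ::
  "'a measure \<Rightarrow> real \<Rightarrow> ('v::euclidean_space \<Rightarrow> 'a \<Rightarrow> 'v) \<Rightarrow> bool" where
  "unbiased_compressor M \<omega> C \<longleftrightarrow>
     (\<forall>x. C x \<in> borel_measurable M \<and> integrable M (C x) \<and>
          (\<integral>s. C x s \<partial>M) = x \<and>
          integrable M (\<lambda>s. (norm (C x s - x))\<^sup>2) \<and>
          (\<integral>s. (norm (C x s - x))\<^sup>2 \<partial>M) \<le> \<omega> * (norm x)\<^sup>2)"

definition favg :: "nat \<Rightarrow> (nat \<Rightarrow> 'v \<Rightarrow> real) \<Rightarrow> 'v \<Rightarrow> real" where
  "favg n f x = (1 / real n) * (\<Sum>i<n. f i x)"

definition gavg :: "nat \<Rightarrow> (nat \<Rightarrow> 'v \<Rightarrow> 'v::real_vector) \<Rightarrow> 'v \<Rightarrow> 'v" where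
  "gavg n g x = (1 / real n) *\<^sub>R (\<Sum>i<n. g i x)"

end

theory Submission
  imports Defs
begin

(* The estimator g^{t+1} differs from the true gradient at y by the average of the compression
   errors C_i(a_i) - a_i, where a_i = grad f_i(y) - h_i.  These errors are independent and centred,
   so all cross terms vanish and the mean square error is at most (omega / n^2) sum_i |a_i|^2.
   Then |a_i|^2 <= 2 |grad f_i(z) - h_i|^2 + 2 |grad f_i(z) - grad f_i(y)|^2, and co-coercivity of
   the gradient of a convex L_i-smooth function bounds the last norm by 2 L_i times the Bregman
   divergence of f_i between z and y; these divergences average to the Bregman divergence of f. *)

definition bregman :: "('v::real_inner \<Rightarrow> real) \<Rightarrow> ('v \<Rightarrow> 'v) \<Rightarrow> 'v \<Rightarrow> 'v \<Rightarrow> real" where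
  "bregman f g x y = f x - f y - g y \<bullet> (x - y)"

lemma has_real_derivative_along_line:
  fixes f :: "'v::real_inner \<Rightarrow> real"
  assumes "(f has_derivative (\<lambda>d. g \<bullet> d)) (at (x + t *\<^sub>R d))"
  shows "((\<lambda>t. f (x + t *\<^sub>R d)) has_real_derivative (g \<bullet> d)) (at t)"
proof -
  have "((\<lambda>t. x + t *\<^sub>R d) has_derivative (\<lambda>t. t *\<^sub>R d)) (at t)"
    by (auto intro!: derivative_eq_intros)
  from has_derivative_compose[OF this assms] show ?thesis
    by (simp add: o_def has_field_derivative_def mult_commute_abs)
qed

lemma power2_norm_add_le:
  fixes a b :: "'v::real_normed_vector"
  shows "(norm (a + b))\<^sup>2 \<le> 2 * (norm a)\<^sup>2 + 2 * (norm b)\<^sup>2"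
proof -
  have "(norm (a + b))\<^sup>2 \<le> (norm a + norm b)\<^sup>2"
    by (simp add: norm_triangle_ineq power_mono)
  also have "\<dots> \<le> 2 * (norm a)\<^sup>2 + 2 * (norm b)\<^sup>2"
    using sum_squares_ge_zero[of "norm a - norm b" 0] by (simp add: power2_eq_square algebra_simps)
  finally show ?thesis .
qed

lemma lipschitz_bound_nonneg:
  fixes g :: "'v::euclidean_space \<Rightarrow> 'w::real_normed_vector"
  assumes "\<And>x x'. norm (g x - g x') \<le> L * norm (x - x')"
  shows "L \<ge> 0"
proof -
  obtain e :: 'v where "e \<in> Basis" using nonempty_Basis by blast
  then show ?thesis using order_trans[OF norm_ge_zero assms[of e 0]] by simp
qed

lemma convex_on_imp_above_gradient:
  fixes f :: "'v::real_inner \<Rightarrow> real"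
  assumes convex: "convex_on UNIV f" and deriv: "(f has_derivative (\<lambda>d. g \<bullet> d)) (at x)"
  shows "f x + g \<bullet> (w - x) \<le> f w"
proof -
  define h where "h t = f (x + t *\<^sub>R (w - x))" for t
  have "convex_on UNIV h"
  proof (rule convex_onI)
    fix t a b :: real
    assume "0 < t" "t < 1"
    moreover have "x + ((1 - t) *\<^sub>R a + t *\<^sub>R b) *\<^sub>R (w - x)
        = (1 - t) *\<^sub>R (x + a *\<^sub>R (w - x)) + t *\<^sub>R (x + b *\<^sub>R (w - x))"
      by (simp add: algebra_simps)
    ultimately show "h ((1 - t) *\<^sub>R a + t *\<^sub>R b) \<le> (1 - t) * h a + t * h b"
      unfolding h_def using convex_onD[OF convex, of t] by auto
  qed simp
  moreover have "(h has_field_derivative g \<bullet> (w - x)) (at 0 within UNIV)"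
    unfolding h_def by (rule has_real_derivative_along_line) (simp add: deriv)
  ultimately have "h 1 - h 0 \<ge> g \<bullet> (w - x) * (1 - 0)"
    by (intro convex_on_imp_above_tangent) auto
  then show ?thesis unfolding h_def by simp
qed

lemma lipschitz_gradient_imp_below_quadratic:
  fixes f :: "'v::real_inner \<Rightarrow> real"
  assumes deriv: "\<And>x. (f has_derivative (\<lambda>d. g x \<bullet> d)) (at x)"
    and lipschitz: "\<And>x x'. norm (g x - g x') \<le> L * norm (x - x')"
  shows "f w \<le> f x + g x \<bullet> (w - x) + L / 2 * (norm (w - x))\<^sup>2"
proof -
  define d where "d = w - x"
  define h where "h t = f (x + t *\<^sub>R d) - t * (g x \<bullet> d) - L / 2 * t\<^sup>2 * (norm d)\<^sup>2" for t
  have h_deriv: "(h has_real_derivative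
      (g (x + t *\<^sub>R d) - g x) \<bullet> d - L * t * (norm d)\<^sup>2) (at t)" for t
    unfolding h_def inner_diff_left
    by (rule derivative_eq_intros has_real_derivative_along_line deriv | simp)+
  have "(g (x + t *\<^sub>R d) - g x) \<bullet> d \<le> L * t * (norm d)\<^sup>2" if "t \<ge> 0" for t
  proof -
    have "(g (x + t *\<^sub>R d) - g x) \<bullet> d \<le> norm (g (x + t *\<^sub>R d) - g x) * norm d"
      by (rule norm_cauchy_schwarz)
    also have "\<dots> \<le> L * norm (t *\<^sub>R d) * norm d"
      using lipschitz[of "x + t *\<^sub>R d" x] by (intro mult_right_mono) auto
    finally show ?thesis
      using that by (simp add: power2_eq_square mult.assoc)
  qed
  then have "h 1 \<le> h 0"
    using h_deriv by (intro DERIV_nonpos_imp_nonincreasing[of 0 1 h]) (simp, meson diff_le_0_iff_le)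
  then show ?thesis unfolding h_def d_def by simp
qed

lemma convex_lipschitz_gradient_cocoercive:
  fixes f :: "'v::real_inner \<Rightarrow> real"
  assumes convex: "convex_on UNIV f"
    and deriv: "\<And>x. (f has_derivative (\<lambda>d. g x \<bullet> d)) (at x)"
    and lipschitz: "\<And>x x'. norm (g x - g x') \<le> L * norm (x - x')" and "L \<ge> 0"
  shows "(norm (g z - g y))\<^sup>2 \<le> 2 * L * bregman f g z y"
proof (cases "L = 0")
  case True
  then show ?thesis using lipschitz[of z y] by simp
next
  case False
  with \<open>L \<ge> 0\<close> have "L > 0" by simp
  define D where "D = g z - g y"
  \<comment> \<open>Compare the tangent at y with the quadratic upper bound at z in the point z - D / L.\<close>
  define w where "w = z - (1 / L) *\<^sub>R D"
  have "f y + g y \<bullet> (w - y) \<le> f w"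
    by (rule convex_on_imp_above_gradient[OF convex deriv])
  also have "f w \<le> f z + g z \<bullet> (w - z) + L / 2 * (norm (w - z))\<^sup>2"
    by (rule lipschitz_gradient_imp_below_quadratic[OF deriv lipschitz])
  finally have "f y + g y \<bullet> (z - y) - (1 / L) * (g y \<bullet> D)
      \<le> f z - (1 / L) * (g z \<bullet> D) + 1 / (2 * L) * (norm D)\<^sup>2"
    using \<open>L > 0\<close> by (simp add: w_def inner_diff_right power2_eq_square)
  then have "1 / L * (g z \<bullet> D - g y \<bullet> D) - 1 / (2 * L) * (norm D)\<^sup>2 \<le> bregman f g z y"
    unfolding bregman_def by (simp add: right_diff_distrib)
  moreover have "g z \<bullet> D - g y \<bullet> D = (norm D)\<^sup>2"
    by (simp add: D_def power2_norm_eq_inner inner_diff_left)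
  ultimately show ?thesis
    using \<open>L > 0\<close> by (simp add: D_def field_simps)
qed

lemma convex_lipschitz_gradient_shift_le:
  fixes f :: "'v::real_inner \<Rightarrow> real"
  assumes convex: "convex_on UNIV f"
    and deriv: "\<And>x. (f has_derivative (\<lambda>d. g x \<bullet> d)) (at x)"
    and lipschitz: "\<And>x x'. norm (g x - g x') \<le> L * norm (x - x')" and "L \<ge> 0"
  shows "(norm (g y - h))\<^sup>2 \<le> 2 * (norm (g z - h))\<^sup>2 + 4 * L * bregman f g z y"
proof -
  have "(norm ((g z - h) + (g y - g z)))\<^sup>2 \<le> 2 * (norm (g z - h))\<^sup>2 + 2 * (norm (g y - g z))\<^sup>2"
    by (rule power2_norm_add_le)
  moreover have "(norm (g y - g z))\<^sup>2 \<le> 2 * L * bregman f g z y"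
    using convex_lipschitz_gradient_cocoercive[OF assms, of z y] by (simp add: norm_minus_commute)
  ultimately show ?thesis by simp
qed

lemma sum_bregman_eq_favg:
  assumes "n > 0"
  shows "(\<Sum>i<n. bregman (f i) (g i) x y) = real n * bregman (favg n f) (gavg n g) x y"
  using assms
  by (simp add: bregman_def favg_def gavg_def sum_subtractf inner_sum_left right_diff_distrib)

lemma sum_power2_norm_gradient_shift_le:
  fixes f :: "nat \<Rightarrow> 'v::real_inner \<Rightarrow> real"
  assumes "n > 0" and convex: "\<And>i. i < n \<Longrightarrow> convex_on UNIV (f i)"
    and deriv: "\<And>i x. i < n \<Longrightarrow> (f i has_derivative (\<lambda>d. g i x \<bullet> d)) (at x)"
    and lipschitz: "\<And>i x x'. i < n \<Longrightarrow> norm (g i x - g i x') \<le> L * norm (x - x')"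
    and "L \<ge> 0"
  shows "(\<Sum>i<n. (norm (g i y - h i))\<^sup>2)
    \<le> 2 * (\<Sum>i<n. (norm (g i z - h i))\<^sup>2) + 4 * L * real n * bregman (favg n f) (gavg n g) z y"
proof -
  have "(\<Sum>i<n. (norm (g i y - h i))\<^sup>2)
      \<le> (\<Sum>i<n. 2 * (norm (g i z - h i))\<^sup>2 + 4 * L * bregman (f i) (g i) z y)"
    using convex deriv lipschitz \<open>L \<ge> 0\<close>
    by (intro sum_mono convex_lipschitz_gradient_shift_le) auto
  also have "\<dots> = 2 * (\<Sum>i<n. (norm (g i z - h i))\<^sup>2) + 4 * L * real n * bregman (favg n f) (gavg n g) z y"
    using \<open>n > 0\<close> by (simp add: sum.distrib sum_distrib_left[symmetric] sum_bregman_eq_favg)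
  finally show ?thesis .
qed

lemma (in prob_space) integral_inner_indep_mean_zero:
  fixes X :: "'i \<Rightarrow> 'a \<Rightarrow> 'v::euclidean_space"
  assumes indep: "indep_vars (\<lambda>_. borel) X I" and "i \<in> I" "j \<in> I" "i \<noteq> j"
    and integrable: "integrable M (X i)" "integrable M (X j)"
    and mean: "integral\<^sup>L M (X i) = 0"
  shows "integrable M (\<lambda>s. X i s \<bullet> X j s)" and "(\<integral>s. X i s \<bullet> X j s \<partial>M) = 0"
proof -
  have coord_integrable: "integrable M (\<lambda>s. (X i s \<bullet> b) * (X j s \<bullet> b))"
    and coord_integral: "(\<integral>s. (X i s \<bullet> b) * (X j s \<bullet> b) \<partial>M) = 0" for b
  proof -
    have "indep_vars (\<lambda>_. borel) X {i, j}"
      using \<open>i \<in> I\<close> \<open>j \<in> I\<close> by (intro indep_vars_subset[OF indep]) auto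
    then have "indep_vars (\<lambda>_. borel) (\<lambda>k s. X k s \<bullet> b) {i, j}"
      by (rule indep_vars_compose2[where Y = "\<lambda>_ v. v \<bullet> b"]) simp
    moreover have "integrable M (\<lambda>s. X k s \<bullet> b)" if "k \<in> {i, j}" for k
      using that integrable by auto
    ultimately have "integrable M (\<lambda>s. \<Prod>k\<in>{i, j}. X k s \<bullet> b)"
      and "(\<integral>s. (\<Prod>k\<in>{i, j}. X k s \<bullet> b) \<partial>M) = (\<Prod>k\<in>{i, j}. \<integral>s. X k s \<bullet> b \<partial>M)"
      by (intro indep_vars_integrable indep_vars_lebesgue_integral; simp)+
    moreover have "(\<integral>s. X i s \<bullet> b \<partial>M) = 0"
      using integral_inner_left[OF integrable(1)] mean by simp
    ultimately show "integrable M (\<lambda>s. (X i s \<bullet> b) * (X j s \<bullet> b))"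
      and "(\<integral>s. (X i s \<bullet> b) * (X j s \<bullet> b) \<partial>M) = 0"
      using \<open>i \<noteq> j\<close> by simp_all
  qed
  have inner_eq: "(\<lambda>s. X i s \<bullet> X j s) = (\<lambda>s. \<Sum>b\<in>Basis. (X i s \<bullet> b) * (X j s \<bullet> b))"
    by (simp only: euclidean_inner[symmetric])
  show "integrable M (\<lambda>s. X i s \<bullet> X j s)"
    unfolding inner_eq using coord_integrable by auto
  show "(\<integral>s. X i s \<bullet> X j s \<partial>M) = 0"
    unfolding inner_eq using coord_integrable coord_integral by simp
qed

lemma (in prob_space) integral_power2_norm_sum_indep:
  fixes X :: "'i \<Rightarrow> 'a \<Rightarrow> 'v::euclidean_space"
  assumes "finite I" and indep: "indep_vars (\<lambda>_. borel) X I"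
    and integrable: "\<And>i. i \<in> I \<Longrightarrow> integrable M (X i)"
    and mean: "\<And>i. i \<in> I \<Longrightarrow> integral\<^sup>L M (X i) = 0"
    and square_integrable: "\<And>i. i \<in> I \<Longrightarrow> integrable M (\<lambda>s. (norm (X i s))\<^sup>2)"
  shows "(\<integral>s. (norm (\<Sum>i\<in>I. X i s))\<^sup>2 \<partial>M) = (\<Sum>i\<in>I. \<integral>s. (norm (X i s))\<^sup>2 \<partial>M)"
proof -
  note cross = integral_inner_indep_mean_zero[OF indep _ _ _ integrable integrable mean]
  have inner_integrable: "integrable M (\<lambda>s. X i s \<bullet> X j s)" if "i \<in> I" "j \<in> I" for i j
    using that cross(1)[of i j] square_integrable[of i]
    by (cases "i = j") (simp_all add: power2_norm_eq_inner)
  have "(norm (\<Sum>i\<in>I. X i s))\<^sup>2 = (\<Sum>i\<in>I. \<Sum>j\<in>I. X i s \<bullet> X j s)" for s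
    by (simp add: power2_norm_eq_inner inner_sum_left inner_sum_right) (rule sum.swap)
  then have "(\<integral>s. (norm (\<Sum>i\<in>I. X i s))\<^sup>2 \<partial>M) = (\<integral>s. (\<Sum>i\<in>I. \<Sum>j\<in>I. X i s \<bullet> X j s) \<partial>M)"
    by simp
  also have "\<dots> = (\<Sum>i\<in>I. \<Sum>j\<in>I. \<integral>s. X i s \<bullet> X j s \<partial>M)"
    using inner_integrable by (simp add: Bochner_Integration.integral_sum)
  also have "\<dots> = (\<Sum>i\<in>I. \<integral>s. X i s \<bullet> X i s \<partial>M)"
  proof (rule sum.cong[OF refl])
    fix i
    assume "i \<in> I"
    then have "(\<Sum>j\<in>I - {i}. \<integral>s. X i s \<bullet> X j s \<partial>M) = 0"
      using cross(2)[of i] by (intro sum.neutral) blast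
    with \<open>finite I\<close> \<open>i \<in> I\<close> show "(\<Sum>j\<in>I. \<integral>s. X i s \<bullet> X j s \<partial>M) = (\<integral>s. X i s \<bullet> X i s \<partial>M)"
      by (simp add: sum.remove)
  qed
  finally show ?thesis by (simp add: power2_norm_eq_inner)
qed

lemma (in prob_space) unbiased_compressors_sum_error:
  fixes C :: "'i \<Rightarrow> 'v::euclidean_space \<Rightarrow> 'a \<Rightarrow> 'v"
  assumes "finite I" and compressor: "\<And>i. i \<in> I \<Longrightarrow> unbiased_compressor M \<omega> (C i)"
    and indep: "indep_vars (\<lambda>_. borel) (\<lambda>i. C i (x i)) I"
  shows "(\<integral>s. (norm (\<Sum>i\<in>I. C i (x i) s - x i))\<^sup>2 \<partial>M) \<le> \<omega> * (\<Sum>i\<in>I. (norm (x i))\<^sup>2)"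
proof -
  have "indep_vars (\<lambda>_. borel) (\<lambda>i s. C i (x i) s - x i) I"
    using indep by (rule indep_vars_compose2[where Y = "\<lambda>i v. v - x i"]) simp
  then have "(\<integral>s. (norm (\<Sum>i\<in>I. C i (x i) s - x i))\<^sup>2 \<partial>M)
      = (\<Sum>i\<in>I. \<integral>s. (norm (C i (x i) s - x i))\<^sup>2 \<partial>M)"
    using compressor \<open>finite I\<close>
    by (intro integral_power2_norm_sum_indep) (auto simp: unbiased_compressor_def prob_space)
  also have "\<dots> \<le> (\<Sum>i\<in>I. \<omega> * (norm (x i))\<^sup>2)"
    using compressor by (intro sum_mono) (simp add: unbiased_compressor_def)
  finally show ?thesis by (simp add: sum_distrib_left)
qed

theorem lemma5:
  fixes M :: "'a measure"
    and n :: nat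
    and f :: "nat \<Rightarrow> 'v::euclidean_space \<Rightarrow> real"
    and gradf :: "nat \<Rightarrow> 'v \<Rightarrow> 'v"
    and L :: "nat \<Rightarrow> real" and Lhat Lf \<mu> \<omega> :: real
    and xstar :: 'v
    and C :: "nat \<Rightarrow> 'v \<Rightarrow> 'a \<Rightarrow> 'v"
    and y z :: 'v and hs :: "nat \<Rightarrow> 'v"
  assumes n_pos: "n \<ge> 1"
    (* gradients *)
    and grad: "\<And>i x. i < n \<Longrightarrow> (f i has_derivative (\<lambda>d. gradf i x \<bullet> d)) (at x)"
    (* Assumption 1 *)
    and smooth_i: "\<And>i x x'. i < n \<Longrightarrow> norm (gradf i x - gradf i x') \<le> L i * norm (x - x')"
    and Lhat_pos: "Lhat > 0"
    and Lhat: "\<And>x x'. (1 / real n) * (\<Sum>i<n. (norm (gradf i x - gradf i x'))\<^sup>2)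
                        \<le> Lhat\<^sup>2 * (norm (x - x'))\<^sup>2"
    (* Assumption 2 *)
    and smooth_f: "\<And>x x'. norm (gavg n gradf x - gavg n gradf x') \<le> Lf * norm (x - x')"
    (* Assumption 3 *)
    and convex_i: "\<And>i. i < n \<Longrightarrow> convex_on UNIV (f i)"
    and mu_nonneg: "\<mu> \<ge> 0"
    and strongly_convex: "\<And>x x'. favg n f x' \<ge> favg n f x + gavg n gradf x \<bullet> (x' - x)
                                   + \<mu> / 2 * (norm (x' - x))\<^sup>2"
    and minimizer: "\<And>x. favg n f xstar \<le> favg n f x"
    (* compressors C_i^{D,y} in U(omega) on the probability space of step t *)
    and prob: "prob_space M"
    and omega_nonneg: "\<omega> \<ge> 0"
    and compr: "\<And>i. i < n \<Longrightarrow> unbiased_compressor M \<omega> (C i)"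
    (* Assumption 4: independence of compressor randomness *)
    and indep: "\<And>xs. prob_space.indep_vars M (\<lambda>_. borel) (\<lambda>i. C i (xs i)) {..<n}"
  shows "(\<integral>s. (norm ((gavg n (\<lambda>i _. hs i) y
                         + (1 / real n) *\<^sub>R (\<Sum>i<n. C i (gradf i y - hs i) s))
                        - gavg n gradf y))\<^sup>2 \<partial>M)
         \<le> 2 * \<omega> / (real n)\<^sup>2 * (\<Sum>i<n. (norm (gradf i z - hs i))\<^sup>2)
           + 4 * \<omega> * Max (L ` {..<n}) / real n
             * (favg n f z - favg n f y - gavg n gradf y \<bullet> (z - y))"
proof -
  interpret prob_space M by (rule prob)
  define a where "a i = gradf i y - hs i" for i
  define Lmax where "Lmax = Max (L ` {..<n})"
  have lipschitz: "norm (gradf i x - gradf i x') \<le> Lmax * norm (x - x')" if "i < n" for i x x'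
  proof -
    have "L i \<le> Lmax" unfolding Lmax_def using that by (intro Max_ge) auto
    then show ?thesis using smooth_i[OF that, of x x'] by (meson mult_right_mono norm_ge_zero order_trans)
  qed
  have "Lmax \<ge> 0"
    using n_pos by (intro lipschitz_bound_nonneg[of "gradf 0"] lipschitz) simp
  have error: "gavg n (\<lambda>i _. hs i) y + (1 / real n) *\<^sub>R (\<Sum>i<n. C i (gradf i y - hs i) s) - gavg n gradf y
      = (1 / real n) *\<^sub>R (\<Sum>i<n. C i (a i) s - a i)" for s
    by (simp add: gavg_def a_def sum_subtractf sum.distrib algebra_simps)
  have sum_bound: "(\<Sum>i<n. (norm (a i))\<^sup>2) \<le> 2 * (\<Sum>i<n. (norm (gradf i z - hs i))\<^sup>2)
      + 4 * Lmax * real n * bregman (favg n f) (gavg n gradf) z y"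
    unfolding a_def using n_pos convex_i grad lipschitz \<open>Lmax \<ge> 0\<close>
    by (intro sum_power2_norm_gradient_shift_le) auto
  have "(\<integral>s. (norm (gavg n (\<lambda>i _. hs i) y + (1 / real n) *\<^sub>R (\<Sum>i<n. C i (gradf i y - hs i) s)
      - gavg n gradf y))\<^sup>2 \<partial>M) = (\<integral>s. (norm (\<Sum>i<n. C i (a i) s - a i))\<^sup>2 \<partial>M) / (real n)\<^sup>2"
    by (simp add: error power2_eq_square)
  also have "\<dots> \<le> \<omega> * (\<Sum>i<n. (norm (a i))\<^sup>2) / (real n)\<^sup>2"
    using compr indep[of a] by (intro divide_right_mono unbiased_compressors_sum_error) auto
  also have "\<dots> \<le> \<omega> * (2 * (\<Sum>i<n. (norm (gradf i z - hs i))\<^sup>2)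
      + 4 * Lmax * real n * bregman (favg n f) (gavg n gradf) z y) / (real n)\<^sup>2"
    using sum_bound omega_nonneg by (intro divide_right_mono mult_left_mono) auto
  finally show ?thesis
    using n_pos by (simp add: Lmax_def bregman_def field_simps power2_eq_square)
qed

end
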